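(* Let $D$ be an arc-colored strongly connected tournament on $n\geq 3$ vertices. If $c(D)\geq \frac{n(n-1)}{2}-n+3$, then $D$ contains a rainbow triangle.
   Context: A tournament is obtained from $K_n$ by orienting each edge in exactly one direction; it is strongly connected if for every ordered pair of distinct vertices $x,y$ there is a directed path from $x$ to $y$. An arc-coloring is any map $C:A(D)\to\mathbb{N}$; $c(D)$ is the number of distinct colors used on the arcs. A rainbow triangle is a directed cycle of length 3 whose arcs have pairwise distinct colors. *)

theory Defs
  imports Main
begin

definition tournament :: "'a set \<Rightarrow> ('a \<times> 'a) set \<Rightarrow> bool" where
  "tournament V A \<longleftrightarrow> A \<subseteq> V \<times> V \<and> (\<forall>x. (x, x) \<notin> A) \<and>
     (\<forall>x\<in>V. \<forall>y\<in>V. x \<noteq> y \<longrightarrow> ((x, y) \<in> A \<longleftrightarrow> (y, x) \<notin> A))"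

definition strongly_connected :: "'a set \<Rightarrow> ('a \<times> 'a) set \<Rightarrow> bool" where
  "strongly_connected V A \<longleftrightarrow> (\<forall>x\<in>V. \<forall>y\<in>V. x \<noteq> y \<longrightarrow> (x, y) \<in> A\<^sup>+)"

definition num_colors :: "('a \<times> 'a) set \<Rightarrow> ('a \<times> 'a \<Rightarrow> nat) \<Rightarrow> nat" where
  "num_colors A C = card (C ` A)"

definition has_rainbow_triangle :: "('a \<times> 'a) set \<Rightarrow> ('a \<times> 'a \<Rightarrow> nat) \<Rightarrow> bool" where
  "has_rainbow_triangle A C \<longleftrightarrow> (\<exists>x y z. x \<noteq> y \<and> y \<noteq> z \<and> x \<noteq> z \<and>
     (x, y) \<in> A \<and> (y, z) \<in> A \<and> (z, x) \<in> A \<and>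
     C (x, y) \<noteq> C (y, z) \<and> C (y, z) \<noteq> C (z, x) \<and> C (x, y) \<noteq> C (z, x))"

end

theory Submission
  imports Defs
begin

text \<open>Without a rainbow triangle, grow a strongly connected subtournament W of D
while keeping at most (|W| choose 2) - |W| + 2 colours on its arcs, starting from a
single vertex. If some vertex u outside W has both an out- and an in-neighbour in W,
strong connectivity of W gives an arc a -> b of W with u -> a and b -> u; the triangle
u a b repeats a colour, so the |W| arcs between u and W bring at most |W| - 1 new
colours. Otherwise strong connectivity of D gives x, y outside W with x -> W -> y -> x,
and since every triangle x w y repeats a colour, the 2|W| + 1 new arcs bring at most
|W| + 1 new colours. Eventually W = V, so c(D) is at most (n choose 2) - n + 2.\<close>

lemma trancl_leaving_arc:
  assumes "(a, b) \<in> R\<^sup>+" "a \<in> P" "b \<notin> P"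
  shows "\<exists>a' b'. (a', b') \<in> R \<and> a' \<in> P \<and> b' \<notin> P"
  using assms
proof (induction rule: trancl_induct)
  case (base y)
  then show ?case by blast
next
  case (step y z)
  then show ?case by (cases "y \<in> P") blast+
qed

lemma strongly_connected_leaving_arc:
  assumes "strongly_connected V R" "R \<subseteq> V \<times> V" "P \<subseteq> V" "P \<noteq> {}" "P \<noteq> V"
  obtains a b where "a \<in> P" "b \<in> V - P" "(a, b) \<in> R"
proof -
  obtain a b where ab: "a \<in> P" "b \<in> V - P"
    using assms(3-5) by blast
  then have "(a, b) \<in> R\<^sup>+"
    using assms(1,3) unfolding strongly_connected_def by fastforce
  from trancl_leaving_arc[OF this ab(1)] ab(2) show thesis
    using assms(2) that by blast
qed

lemma strongly_connected_mono:
  "strongly_connected V R \<Longrightarrow> R \<subseteq> R' \<Longrightarrow> strongly_connected V R'"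
  unfolding strongly_connected_def using trancl_mono by blast

lemma strongly_connected_insert:
  assumes "strongly_connected W R" "a \<in> W" "b \<in> W" "(u, a) \<in> R\<^sup>+" "(b, u) \<in> R\<^sup>+"
  shows "strongly_connected (insert u W) R"
proof -
  have reach_W: "(x, y) \<in> R\<^sup>*" if "x \<in> W" "y \<in> W" for x y
    using assms(1) that unfolding strongly_connected_def by (cases "x = y") (auto intro: trancl_into_rtrancl)
  have "(u, w) \<in> R\<^sup>+" if "w \<in> W" for w
    using assms(4) reach_W[OF assms(2) that] by (rule trancl_rtrancl_trancl)
  moreover have "(w, u) \<in> R\<^sup>+" if "w \<in> W" for w
    using reach_W[OF that assms(3)] assms(5) by (rule rtrancl_trancl_trancl)
  ultimately show ?thesis
    using assms(1) unfolding strongly_connected_def by blast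
qed

lemma strongly_connected_insert_cycle:
  assumes "strongly_connected W R" "w \<in> W" "(x, w) \<in> R" "(w, y) \<in> R" "(y, x) \<in> R"
  shows "strongly_connected (insert x (insert y W)) R"
proof -
  have "(y, w) \<in> R\<^sup>+"
    using assms(3,5) by (meson trancl.simps)
  with assms(1,2,2) have "strongly_connected (insert y W) R"
    using r_into_trancl'[OF assms(4)] by (rule strongly_connected_insert)
  then show ?thesis
    using insertI2[OF assms(2)] insertI1 r_into_trancl'[OF assms(3)] r_into_trancl'[OF assms(5)]
    by (rule strongly_connected_insert)
qed

lemma tournamentD:
  assumes "tournament V A"
  shows "A \<subseteq> V \<times> V" "(x, x) \<notin> A"
    and "x \<in> V \<Longrightarrow> y \<in> V \<Longrightarrow> x \<noteq> y \<Longrightarrow> (x, y) \<in> A \<longleftrightarrow> (y, x) \<notin> A"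
  using assms unfolding tournament_def by blast+

lemma triangle_not_rainbow:
  assumes "\<not> has_rainbow_triangle A C" "x \<noteq> y" "y \<noteq> z" "x \<noteq> z"
    "(x, y) \<in> A" "(y, z) \<in> A" "(z, x) \<in> A"
  shows "C (x, y) = C (y, z) \<or> C (y, z) = C (z, x) \<or> C (x, y) = C (z, x)"
  using assms unfolding has_rainbow_triangle_def by blast

lemma card_image_Un_less:
  assumes "finite F" "e \<in> F" "C e \<in> C ` (E \<union> (F - {e}))"
  shows "card (C ` (E \<union> F)) < card (C ` E) + card F"
proof -
  have "C ` (E \<union> F) = C ` E \<union> C ` (F - {e})"
    using assms(2,3) by blast
  then have "card (C ` (E \<union> F)) \<le> card (C ` E) + card (C ` (F - {e}))"
    by (simp add: card_Un_le)
  moreover have "card (C ` (F - {e})) \<le> card (F - {e})"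
    using assms(1) by (simp add: card_image_le)
  moreover have "card (F - {e}) < card F"
    using assms(1,2) by (rule card_Diff1_less)
  ultimately show ?thesis by linarith
qed

lemma card_arcs_at_vertex_le:
  assumes "tournament V A" "u \<in> V" "W \<subseteq> V" "finite W"
  shows "card (A \<inter> ({u} \<times> W \<union> W \<times> {u})) \<le> card W"
proof -
  define f where "f w = (if (u, w) \<in> A then (u, w) else (w, u))" for w
  have "A \<inter> ({u} \<times> W \<union> W \<times> {u}) \<subseteq> f ` W"
  proof
    fix e assume "e \<in> A \<inter> ({u} \<times> W \<union> W \<times> {u})"
    then consider w where "w \<in> W" "e = (u, w)" "(u, w) \<in> A"
      | w where "w \<in> W" "e = (w, u)" "(w, u) \<in> A" "(u, w) \<notin> A"
      using tournamentD(2,3)[OF assms(1)] assms(2,3) by blast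
    then show "e \<in> f ` W"
      by cases (auto simp: f_def)
  qed
  then show ?thesis
    using assms(4) by (meson card_image_le card_mono finite_imageI order_trans)
qed

lemma num_colors_insert_vertex_less:
  assumes T: "tournament V A" and no_rainbow: "\<not> has_rainbow_triangle A C"
    and W: "finite W" "W \<subseteq> V" "strongly_connected W (A \<inter> W \<times> W)"
    and u: "u \<in> V - W" and a: "a \<in> W" "(u, a) \<in> A" and b: "b \<in> W" "(b, u) \<in> A"
  shows "num_colors (A \<inter> insert u W \<times> insert u W) C < num_colors (A \<inter> W \<times> W) C + card W"
proof -
  note arc_iff = tournamentD(3)[OF T]
  define E where "E = A \<inter> W \<times> W"
  define F where "F = A \<inter> ({u} \<times> W \<union> W \<times> {u})"
  obtain a' b' where a': "a' \<in> W" "(u, a') \<in> A" and b': "b' \<in> W" "(b', u) \<in> A"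
    and a'b': "(a', b') \<in> A"
  proof -
    let ?P = "{w \<in> W. (u, w) \<in> A}"
    have "b \<notin> ?P"
      using arc_iff[of u b] u b W(2) by auto
    then obtain a' b' where "a' \<in> ?P" "b' \<in> W - ?P" "(a', b') \<in> A \<inter> W \<times> W"
      using strongly_connected_leaving_arc[OF W(3), of ?P] a b by blast
    moreover have "(b', u) \<in> A"
      using calculation arc_iff[of u b'] u W(2) by auto
    ultimately show thesis
      using that by blast
  qed
  have "u \<noteq> a'" "a' \<noteq> b'" "u \<noteq> b'"
    using u a' b' a'b' tournamentD(2)[OF T] by auto
  then have "C (u, a') = C (a', b') \<or> C (a', b') = C (b', u) \<or> C (u, a') = C (b', u)"
    using triangle_not_rainbow[OF no_rainbow] a'(2) b'(2) a'b' by blast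
  moreover have "(u, a') \<in> F" "(b', u) \<in> F" "(a', b') \<in> E"
    using a' b' a'b' unfolding E_def F_def by auto
  ultimately obtain e where "e \<in> F" "C e \<in> C ` (E \<union> (F - {e}))"
  proof (elim disjE)
    assume "C (u, a') = C (a', b')"
    then show thesis
      using that[of "(u, a')"] \<open>(u, a') \<in> F\<close> \<open>(a', b') \<in> E\<close> by (metis UnI1 image_eqI)
  next
    assume "C (a', b') = C (b', u)"
    then show thesis
      using that[of "(b', u)"] \<open>(b', u) \<in> F\<close> \<open>(a', b') \<in> E\<close> by (metis UnI1 image_eqI)
  next
    assume "C (u, a') = C (b', u)"
    moreover have "(b', u) \<in> F - {(u, a')}"
      using \<open>(b', u) \<in> F\<close> \<open>u \<noteq> b'\<close> by simp
    ultimately show thesis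
      using that[of "(u, a')"] \<open>(u, a') \<in> F\<close> by (metis UnI2 image_eqI)
  qed
  then have "card (C ` (E \<union> F)) < card (C ` E) + card F"
    using W(1) by (intro card_image_Un_less) (auto simp: F_def)
  moreover have "card F \<le> card W"
    unfolding F_def using card_arcs_at_vertex_le[OF T _ W(2,1)] u by blast
  moreover have "A \<inter> insert u W \<times> insert u W = E \<union> F"
    using tournamentD(2)[OF T] unfolding E_def F_def by auto
  ultimately show ?thesis
    unfolding num_colors_def E_def by simp
qed

lemma num_colors_insert_pair_le:
  assumes T: "tournament V A" and no_rainbow: "\<not> has_rainbow_triangle A C"
    and W: "finite W" "W \<subseteq> V" and x: "x \<in> V - W" and y: "y \<in> V - W"
    and xW: "\<forall>w\<in>W. (x, w) \<in> A" and Wy: "\<forall>w\<in>W. (w, y) \<in> A" and yx: "(y, x) \<in> A"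
  shows "num_colors (A \<inter> insert x (insert y W) \<times> insert x (insert y W)) C
    \<le> num_colors (A \<inter> W \<times> W) C + card W + 1"
proof -
  note arc_iff = tournamentD(3)[OF T] and irrefl = tournamentD(2)[OF T]
  have "x \<noteq> y"
    using yx irrefl by auto
  define g where "g w = (if C (x, w) = C (y, x) then C (w, y) else C (x, w))" for w
  have arcs: "A \<inter> insert x (insert y W) \<times> insert x (insert y W)
      \<subseteq> A \<inter> W \<times> W \<union> {(y, x)} \<union> (\<lambda>w. (x, w)) ` W \<union> (\<lambda>w. (w, y)) ` W"
  proof -
    have "(x, y) \<notin> A" "\<forall>w\<in>W. (w, x) \<notin> A \<and> (y, w) \<notin> A"
      using arc_iff x y xW Wy yx W(2) \<open>x \<noteq> y\<close> by blast+
    then show ?thesis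
      using irrefl by auto
  qed
  have "C (x, w) \<in> insert (C (y, x)) (g ` W)" "C (w, y) \<in> insert (C (y, x)) (g ` W)"
    if "w \<in> W" for w
  proof -
    have "w \<noteq> y" "w \<noteq> x"
      using that x y by auto
    then have "C (x, w) = C (w, y) \<or> C (w, y) = C (y, x) \<or> C (x, w) = C (y, x)"
      using \<open>x \<noteq> y\<close> that xW Wy yx by (intro triangle_not_rainbow[OF no_rainbow]) auto
    then show "C (x, w) \<in> insert (C (y, x)) (g ` W)" "C (w, y) \<in> insert (C (y, x)) (g ` W)"
      using that unfolding g_def by (auto intro!: image_eqI[of _ _ w])
  qed
  then have "C ` (A \<inter> insert x (insert y W) \<times> insert x (insert y W))
      \<subseteq> C ` (A \<inter> W \<times> W) \<union> insert (C (y, x)) (g ` W)"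
    using arcs by blast
  then have "num_colors (A \<inter> insert x (insert y W) \<times> insert x (insert y W)) C
      \<le> card (C ` (A \<inter> W \<times> W) \<union> insert (C (y, x)) (g ` W))"
    unfolding num_colors_def using W(1) by (intro card_mono) auto
  also have "\<dots> \<le> num_colors (A \<inter> W \<times> W) C + card (insert (C (y, x)) (g ` W))"
    unfolding num_colors_def by (rule card_Un_le)
  also have "card (insert (C (y, x)) (g ` W)) \<le> card W + 1"
    using W(1) card_image_le[OF W(1), of g] by (simp add: card_insert_if)
  finally show ?thesis
    by linarith
qed

lemma strong_tournament_proper_subset_cases:
  assumes T: "tournament V A" and S: "strongly_connected V A"
    and W: "W \<subseteq> V" "W \<noteq> {}" "W \<noteq> V"
  obtains (mixed) u a b where "u \<in> V - W" "a \<in> W" "(u, a) \<in> A" "b \<in> W" "(b, u) \<in> A"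
    | (cycle) x y where "x \<in> V - W" "y \<in> V - W" "\<forall>w\<in>W. (x, w) \<in> A" "\<forall>w\<in>W. (w, y) \<in> A"
      "(y, x) \<in> A"
proof (cases "\<exists>u\<in>V - W. \<exists>a\<in>W. \<exists>b\<in>W. (u, a) \<in> A \<and> (b, u) \<in> A")
  case True
  then show thesis
    using mixed by blast
next
  case False
  note arc_iff = tournamentD(3)[OF T] and AV = tournamentD(1)[OF T]
  have dominated: "(w, v) \<in> A" if "v \<in> V - W" "w' \<in> W" "(w', v) \<in> A" "w \<in> W" for v w w'
  proof (rule ccontr)
    assume "(w, v) \<notin> A"
    then have "(v, w) \<in> A"
      using arc_iff[of v w] that W(1) by auto
    then show False
      using False that by blast
  qed
  have dominating: "(v, w) \<in> A" if "v \<in> V - W" "w' \<in> W" "(v, w') \<in> A" "w \<in> W" for v w w'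
  proof (rule ccontr)
    assume "(v, w) \<notin> A"
    then have "(w, v) \<in> A"
      using arc_iff[of v w] that W(1) by auto
    then show False
      using False that by blast
  qed
  define Y where "Y = {v \<in> V - W. \<forall>w\<in>W. (w, v) \<in> A}"
  obtain w1 v where "w1 \<in> W" "v \<in> V - W" "(w1, v) \<in> A"
    using strongly_connected_leaving_arc[OF S AV W] .
  then have "v \<in> Y"
    unfolding Y_def using dominated by auto
  moreover have "Y \<subseteq> V" "Y \<noteq> V"
    using W unfolding Y_def by blast+
  ultimately obtain y z where y: "y \<in> Y" and z: "z \<in> V - Y" and yz: "(y, z) \<in> A"
    using strongly_connected_leaving_arc[OF S AV, of Y] by blast
  have "z \<notin> W"
    using y yz arc_iff[of y z] W(1) unfolding Y_def by auto
  then obtain w2 where "w2 \<in> W" "(w2, z) \<notin> A"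
    using z unfolding Y_def by blast
  then have "(z, w2) \<in> A"
    using arc_iff[of z w2] z \<open>z \<notin> W\<close> W(1) by auto
  then have "\<forall>w\<in>W. (z, w) \<in> A"
    using dominating z \<open>z \<notin> W\<close> \<open>w2 \<in> W\<close> by blast
  moreover have "y \<in> V - W" "\<forall>w\<in>W. (w, y) \<in> A"
    using y unfolding Y_def by auto
  ultimately show thesis
    using cycle[of z y] z \<open>z \<notin> W\<close> yz by blast
qed

text \<open>The bound (|W| choose 2) - |W| + 2 on the colours inside W, rearranged to avoid
truncated subtraction.\<close>

definition few_colors :: "('a \<times> 'a) set \<Rightarrow> ('a \<times> 'a \<Rightarrow> nat) \<Rightarrow> 'a set \<Rightarrow> bool" where
  "few_colors A C W \<longleftrightarrow> num_colors (A \<inter> W \<times> W) C + card W \<le> (card W choose 2) + 2"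

lemma Suc_choose_two: "Suc m choose 2 = (m choose 2) + m"
  by (simp add: numeral_2_eq_2)

lemma le_choose_two: "3 \<le> n \<Longrightarrow> n \<le> n choose 2"
proof -
  assume "3 \<le> n"
  then have "n * 2 \<le> n * (n - 1)"
    by simp
  then show "n \<le> n choose 2"
    unfolding choose_two by linarith
qed

lemma few_colors_singleton:
  assumes "tournament V A"
  shows "few_colors A C {v}"
proof -
  have "A \<inter> {v} \<times> {v} = {}"
    using tournamentD(2)[OF assms] by blast
  then show ?thesis
    by (simp add: few_colors_def num_colors_def)
qed

lemma few_colors_insert_vertex:
  assumes "tournament V A" "\<not> has_rainbow_triangle A C"
    and "finite W" "W \<subseteq> V" "strongly_connected W (A \<inter> W \<times> W)"
    and "u \<in> V - W" "a \<in> W" "(u, a) \<in> A" "b \<in> W" "(b, u) \<in> A"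
    and "few_colors A C W"
  shows "few_colors A C (insert u W)"
proof -
  have "num_colors (A \<inter> insert u W \<times> insert u W) C < num_colors (A \<inter> W \<times> W) C + card W"
    using assms(1-10) by (rule num_colors_insert_vertex_less)
  moreover have "card (insert u W) = Suc (card W)"
    using assms(3,6) by simp
  ultimately show ?thesis
    using assms(11) unfolding few_colors_def by (simp add: Suc_choose_two)
qed

lemma few_colors_insert_pair:
  assumes T: "tournament V A" and no_rainbow: "\<not> has_rainbow_triangle A C"
    and W: "finite W" "W \<subseteq> V" "W \<noteq> {}" and x: "x \<in> V - W" and y: "y \<in> V - W"
    and xW: "\<forall>w\<in>W. (x, w) \<in> A" and Wy: "\<forall>w\<in>W. (w, y) \<in> A" and yx: "(y, x) \<in> A"
    and few: "few_colors A C W"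
  shows "few_colors A C (insert x (insert y W))"
proof -
  let ?W' = "insert x (insert y W)"
  have colours: "num_colors (A \<inter> ?W' \<times> ?W') C \<le> num_colors (A \<inter> W \<times> W) C + card W + 1"
    using T no_rainbow W(1,2) x y xW Wy yx by (rule num_colors_insert_pair_le)
  have "x \<noteq> y"
    using yx tournamentD(2)[OF T] by auto
  then have card: "card ?W' = Suc (Suc (card W))"
    using x y W(1) by simp
  show ?thesis
  proof (cases "card W = 1")
    case True
    then have "num_colors (A \<inter> W \<times> W) C = 0"
      using tournamentD(2)[OF T] by (auto simp: num_colors_def card_1_singleton_iff)
    with True show ?thesis
      using colours card unfolding few_colors_def by (simp add: Suc_choose_two)
  next
    case False
    moreover have "card W \<noteq> 0"
      using W(1,3) by simp
    ultimately have "2 \<le> card W"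
      by linarith
    then show ?thesis
      using colours card few unfolding few_colors_def by (simp add: Suc_choose_two)
  qed
qed

lemma strong_subtournament_extend:
  assumes fin: "finite V" and T: "tournament V A" and S: "strongly_connected V A"
    and no_rainbow: "\<not> has_rainbow_triangle A C"
    and W: "W \<subseteq> V" "W \<noteq> {}" "W \<noteq> V" "strongly_connected W (A \<inter> W \<times> W)"
    and few: "few_colors A C W"
  obtains W' where "W \<subset> W'" "W' \<subseteq> V" "strongly_connected W' (A \<inter> W' \<times> W')"
    "few_colors A C W'"
proof -
  have finW: "finite W"
    using fin W(1) finite_subset by blast
  have strong_in: "strongly_connected W (A \<inter> W' \<times> W')" if "W \<subseteq> W'" for W'
    using W(4) by (rule strongly_connected_mono) (use that in blast)
  show thesis
  proof (cases rule: strong_tournament_proper_subset_cases[OF T S W(1-3), case_names mixed cycle])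
    case (mixed u a b)
    let ?W' = "insert u W"
    have "strongly_connected ?W' (A \<inter> ?W' \<times> ?W')"
      using strong_in[of ?W'] by (rule strongly_connected_insert[where a = a and b = b]) (use mixed in auto)
    moreover have "few_colors A C ?W'"
      using T no_rainbow finW W(1,4) mixed few by (rule few_colors_insert_vertex)
    ultimately show thesis
      using that[of ?W'] mixed W(1) by auto
  next
    case (cycle x y)
    let ?W' = "insert x (insert y W)"
    obtain w where "w \<in> W"
      using W(2) by blast
    then have "strongly_connected ?W' (A \<inter> ?W' \<times> ?W')"
      using strong_in[of ?W'] cycle by (intro strongly_connected_insert_cycle[where w = w]) auto
    moreover have "few_colors A C ?W'"
      using T no_rainbow finW W(1,2) cycle few by (rule few_colors_insert_pair)
    ultimately show thesis
      using that[of ?W'] cycle W(1) by auto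
  qed
qed

lemma strong_tournament_few_colors:
  assumes fin: "finite V" and T: "tournament V A" and S: "strongly_connected V A"
    and no_rainbow: "\<not> has_rainbow_triangle A C" and "V \<noteq> {}"
  shows "num_colors A C + card V \<le> (card V choose 2) + 2"
proof -
  have grow: "few_colors A C V"
    if "W \<subseteq> V" "W \<noteq> {}" "strongly_connected W (A \<inter> W \<times> W)" "few_colors A C W" for W
    using that
  proof (induction "card (V - W)" arbitrary: W rule: less_induct)
    case less
    show ?case
    proof (cases "W = V")
      case True
      with less.prems(4) show ?thesis
        by simp
    next
      case False
      obtain W' where W': "W \<subset> W'" "W' \<subseteq> V" "strongly_connected W' (A \<inter> W' \<times> W')"
        "few_colors A C W'"
        using strong_subtournament_extend[OF fin T S no_rainbow less.prems(1,2) False less.prems(3,4)] .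
      have "card (V - W') < card (V - W)"
        using W'(1,2) fin by (intro psubset_card_mono) auto
      then show ?thesis
        using less.hyps W' by blast
    qed
  qed
  obtain v where "v \<in> V"
    using assms(5) by blast
  then have "few_colors A C V"
    using few_colors_singleton[OF T] by (intro grow[of "{v}"]) (auto simp: strongly_connected_def)
  moreover have "A \<inter> V \<times> V = A"
    using tournamentD(1)[OF T] by blast
  ultimately show ?thesis
    unfolding few_colors_def by simp
qed

theorem theorem4:
  fixes V :: "'a set" and A :: "('a \<times> 'a) set" and C :: "'a \<times> 'a \<Rightarrow> nat" and n :: nat
  assumes "finite V" and "card V = n" and "n \<ge> 3"
    and "tournament V A" and "strongly_connected V A"
    and "num_colors A C \<ge> n * (n - 1) div 2 - n + 3"
  shows "has_rainbow_triangle A C"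
proof (rule ccontr)
  assume "\<not> has_rainbow_triangle A C"
  moreover have "V \<noteq> {}"
    using assms(2,3) by auto
  ultimately have "num_colors A C + n \<le> (n choose 2) + 2"
    using strong_tournament_few_colors assms(1,2,4,5) by blast
  moreover have "n \<le> n choose 2"
    using assms(3) by (rule le_choose_two)
  ultimately show False
    using assms(6) unfolding choose_two by linarith
qed

end
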